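(* Let $\alpha\neq\beta$, let $(g_n)$ be as in the context, set $w=\dfrac{\beta-x}{\beta-\alpha}$ and $\Phi(y)=\dfrac{(\alpha-\beta)yw+\beta}{1-yw}$. Let $y=y(t)$ be the unique formal power series in $t$ with $y(0)=0$ satisfying $y=t\,\Phi(y)$. Then for all $n\ge0$, $$g_n(x)=[t^n]\,\frac{1}{1-y(t)},\qquad\text{i.e.}\qquad \sum_{n\ge0}g_n(x)\,t^n=\frac{1}{1-y(t)}.$$
   Context: Fix complex numbers $\alpha\neq\beta$. Define polynomials $g_n(x)\in\mathbb{C}[x]$ recursively by $g_0(x)=1$ and, for $n\ge1$, $$(x-\alpha)(\alpha-\beta)^{n-1}g_n(x)=\alpha(x-\beta)^n g_{n-1}(\alpha)-x(\alpha-\beta)^n g_{n-1}(x).$$ (The right-hand side vanishes at $x=\alpha$, so it is divisible by $x-\alpha$ and $g_n$ is a uniquely determined polynomial.) $[t^n]F(t)$ denotes the coefficient of $t^n$ in the formal power series $F$. *)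

theory Defs
  imports "HOL-Computational_Algebra.Polynomial" "HOL-Computational_Algebra.Formal_Power_Series"
begin

text \<open>The recursion
  (x-a)(a-b)^(n-1) g_n(x) = a (x-b)^n g_(n-1)(a) - x (a-b)^n g_(n-1)(x)
  is rendered as exact polynomial division (the right-hand side is divisible).\<close>
fun gpoly :: "complex \<Rightarrow> complex \<Rightarrow> nat \<Rightarrow> complex poly" where
  "gpoly a b 0 = 1"
| "gpoly a b (Suc n) =
     (smult (a * poly (gpoly a b n) a) ([:-b, 1:] ^ Suc n)
      - smult ((a - b) ^ Suc n) (pCons 0 (gpoly a b n)))
     div (smult ((a - b) ^ n) [:-a, 1:])"

definition Phi :: "complex \<Rightarrow> complex \<Rightarrow> complex \<Rightarrow> complex fps \<Rightarrow> complex fps" where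
  "Phi a b x y = (let w = (b - x) / (b - a) in
     (fps_const ((a - b) * w) * y + fps_const b) * inverse (1 - fps_const w * y))"

end

theory Submission
  imports Defs
begin

(* Clearing the denominator, y = t Phi(y) becomes the quadratic
   y (1 - w y) = t (c w y + beta) with c = alpha - beta, which fixes the coefficients of y
   recursively; so y exists and is unique. Rescaling t to w t shows that w y(t) is y_alpha(w t),
   where y_alpha is the solution for x = alpha (i.e. w = 1). For F = 1/(1 - y) this gives
   (w - 1)(F - 1) + t (beta + c w) F = alpha w t F_alpha(w t); comparing coefficients of t^(n+1)
   and multiplying by c^(n+1) yields exactly the recurrence defining g_(n+1). The coefficients
   of F are polynomials in x, so this also determines them at x = alpha, where the recurrence
   degenerates. *)

unbundle fps_syntax

lemma fps_square_nth:
  fixes y :: "'a::comm_ring_1 fps"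
  assumes "y $ 0 = 0"
  shows "(y * y) $ n = (\<Sum>i\<in>{1..<n}. y $ i * y $ (n - i))"
proof -
  have "(y * y) $ n = (\<Sum>i=0..n. y $ i * y $ (n - i))" by (rule fps_mult_nth)
  also have "\<dots> = (\<Sum>i\<in>{1..<n}. y $ i * y $ (n - i))"
    by (rule sum.mono_neutral_right) (use assms in \<open>auto simp: not_less_eq_eq\<close>)
  finally show ?thesis .
qed

lemma fps_inverse_one_minus_nth:
  fixes y :: "'a::field fps"
  assumes "y $ 0 = 0" and "n \<ge> 1"
  shows "inverse (1 - y) $ n = (\<Sum>i=1..n. y $ i * inverse (1 - y) $ (n - i))"
proof -
  define F where "F = inverse (1 - y)"
  have "((1 - y) * F) $ n = 0"
    using assms by (simp add: F_def inverse_mult_eq_1')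
  then have "(\<Sum>i=0..n. (1 - y) $ i * F $ (n - i)) = 0" unfolding fps_mult_nth .
  moreover have "(\<Sum>i=0..n. (1 - y) $ i * F $ (n - i))
      = (1 - y) $ 0 * F $ n + (\<Sum>i=1..n. (1 - y) $ i * F $ (n - i))"
    by (simp add: sum.atLeast_Suc_atMost)
  moreover have "(\<Sum>i=1..n. (1 - y) $ i * F $ (n - i)) = - (\<Sum>i=1..n. y $ i * F $ (n - i))"
    by (simp add: sum_negf [symmetric])
  ultimately show ?thesis using assms(1) by (simp add: F_def)
qed

lemma fps_eq_mult_inverse_iff:
  fixes y d :: "'a::field fps"
  assumes "d $ 0 \<noteq> 0"
  shows "y = f * inverse d \<longleftrightarrow> y * d = f"
  using inverse_mult_eq_1 [OF assms] inverse_mult_eq_1' [OF assms] by (auto simp: mult.assoc)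

definition polyfun :: "('a::comm_semiring_0 \<Rightarrow> 'a) \<Rightarrow> bool" where
  "polyfun f \<longleftrightarrow> (\<exists>p. poly p = f)"

lemma polyfun_const: "polyfun (\<lambda>x. k)"
  unfolding polyfun_def by (rule exI [of _ "[:k:]"]) auto

lemma polyfun_add: "polyfun f \<Longrightarrow> polyfun g \<Longrightarrow> polyfun (\<lambda>x. f x + g x)"
  unfolding polyfun_def by (metis poly_add)

lemma polyfun_mult: "polyfun f \<Longrightarrow> polyfun g \<Longrightarrow> polyfun (\<lambda>x. f x * g x)"
  for f g :: "'a::comm_semiring_1 \<Rightarrow> 'a"
  unfolding polyfun_def by (metis poly_mult)

lemma polyfun_sum:
  "finite A \<Longrightarrow> (\<And>i. i \<in> A \<Longrightarrow> polyfun (f i)) \<Longrightarrow> polyfun (\<lambda>x. \<Sum>i\<in>A. f i x)"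
  by (induction A rule: finite_induct) (simp_all add: polyfun_const polyfun_add)

lemma polyfun_inverse_one_minus_nth:
  fixes y :: "'a::field \<Rightarrow> 'a fps"
  assumes "\<And>x. y x $ 0 = 0" and "\<And>i. polyfun (\<lambda>x. y x $ i)"
  shows "polyfun (\<lambda>x. inverse (1 - y x) $ n)"
proof (induction n rule: less_induct)
  case (less n)
  show ?case
  proof (cases "n = 0")
    case True
    then show ?thesis using assms(1) by (simp add: polyfun_const)
  next
    case False
    then have "polyfun (\<lambda>x. \<Sum>i=1..n. y x $ i * inverse (1 - y x) $ (n - i))"
      using less by (intro polyfun_sum polyfun_mult assms(2)) auto
    then show ?thesis using False by (simp add: fps_inverse_one_minus_nth [OF assms(1)])
  qed
qed

definition quad_step :: "'a::comm_ring_1 \<Rightarrow> 'a \<Rightarrow> 'a \<Rightarrow> (nat \<Rightarrow> 'a) \<Rightarrow> nat \<Rightarrow> 'a" where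
  "quad_step c b w f n = (if n = 0 then 0 else
     w * (\<Sum>i\<in>{1..<n}. f i * f (n - i)) + c * w * f (n - 1) + (if n = 1 then b else 0))"

function quad_coeff :: "'a::comm_ring_1 \<Rightarrow> 'a \<Rightarrow> 'a \<Rightarrow> nat \<Rightarrow> 'a" where
  "quad_coeff c b w n = (if n = 0 then 0 else
     w * (\<Sum>i\<in>{1..<n}. quad_coeff c b w i * quad_coeff c b w (n - i))
     + c * w * quad_coeff c b w (n - 1) + (if n = 1 then b else 0))"
  by auto
termination by (relation "measure (\<lambda>(c, b, w, n). n)") auto

declare quad_coeff.simps [simp del]

lemma quad_coeff_step: "quad_coeff c b w n = quad_step c b w (quad_coeff c b w) n"
  unfolding quad_step_def by (subst quad_coeff.simps) (rule refl)

lemma quad_step_fixpoint_unique: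
  assumes "\<And>n. f n = quad_step c b w f n"
  shows "f = quad_coeff c b w"
proof
  fix n show "f n = quad_coeff c b w n"
  proof (induction n rule: less_induct)
    case (less n)
    have "f n = quad_step c b w f n" by (rule assms)
    also have "\<dots> = quad_step c b w (quad_coeff c b w) n"
      unfolding quad_step_def using less by (auto intro!: sum.cong)
    also have "\<dots> = quad_coeff c b w n" by (rule quad_coeff_step [symmetric])
    finally show ?case .
  qed
qed

definition quad_root :: "'a::comm_ring_1 \<Rightarrow> 'a \<Rightarrow> 'a \<Rightarrow> 'a fps" where
  "quad_root c b w = Abs_fps (quad_coeff c b w)"

definition is_quad_root :: "'a::comm_ring_1 \<Rightarrow> 'a \<Rightarrow> 'a \<Rightarrow> 'a fps \<Rightarrow> bool" where
  "is_quad_root c b w y \<longleftrightarrow> y $ 0 = 0 \<and>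
     y * (1 - fps_const w * y) = fps_X * (fps_const (c * w) * y + fps_const b)"

lemma is_quad_root_iff_fixpoint:
  "is_quad_root c b w y \<longleftrightarrow> (\<forall>n. y $ n = quad_step c b w (fps_nth y) n)"
proof (cases "y $ 0 = 0")
  case True
  have "(y * (1 - fps_const w * y)) $ n = y $ n - w * (\<Sum>i\<in>{1..<n}. y $ i * y $ (n - i))" for n
  proof -
    have "y * (1 - fps_const w * y) = y - fps_const w * (y * y)" by (simp add: algebra_simps)
    then show ?thesis using fps_square_nth [OF True, of n] by simp
  qed
  then show ?thesis
    using True unfolding is_quad_root_def fps_eq_iff quad_step_def
    by (auto simp: algebra_simps)
next
  case False
  then show ?thesis unfolding is_quad_root_def quad_step_def by auto
qed

lemma is_quad_root_quad_root: "is_quad_root c b w (quad_root c b w)"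
  unfolding is_quad_root_iff_fixpoint quad_root_def
  by (simp add: Abs_fps_inverse flip: quad_coeff_step)

lemma is_quad_root_unique: "is_quad_root c b w y \<Longrightarrow> y = quad_root c b w"
  unfolding is_quad_root_iff_fixpoint quad_root_def
  by (metis fps_nth_inverse quad_step_fixpoint_unique)

lemma quad_root_nth_0 [simp]: "quad_root c b w $ 0 = 0"
  using is_quad_root_quad_root is_quad_root_def by blast

(* Both sides solve the equation with parameters (c w, b w, 1). *)
lemma quad_root_compose_linear:
  fixes c b w :: "'a::idom"
  shows "quad_root c b 1 oo (fps_const w * fps_X) = fps_const w * quad_root c b w"
proof -
  define L where "L = fps_const w * fps_X"
  define Z where "Z = quad_root c b 1 oo L"
  define Y where "Y = quad_root c b w"
  have L0: "L $ 0 = 0" by (simp add: L_def)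
  have "is_quad_root (c * w) (b * w) 1 Z"
  proof -
    have "(quad_root c b 1 * (1 - quad_root c b 1)) oo L
        = (fps_X * (fps_const c * quad_root c b 1 + fps_const b)) oo L"
      using is_quad_root_quad_root [of c b 1] by (simp add: is_quad_root_def)
    then have "Z * (1 - Z) = L * (fps_const c * Z + fps_const b)"
      by (simp add: Z_def L0 fps_compose_mult_distrib fps_compose_sub_distrib
          fps_compose_add_distrib)
    also have "\<dots> = fps_X * (fps_const (c * w * 1) * Z + fps_const (b * w))"
      by (simp add: L_def algebra_simps flip: fps_const_mult)
    finally show ?thesis by (simp add: is_quad_root_def Z_def)
  qed
  moreover have "is_quad_root (c * w) (b * w) 1 (fps_const w * Y)"
  proof -
    define W where "W = fps_const w"
    have eq: "Y * (1 - W * Y) = fps_X * (fps_const c * W * Y + fps_const b)"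
      using is_quad_root_quad_root [of c b w] by (simp add: is_quad_root_def Y_def W_def)
    have "(W * Y) * (1 - W * Y) = W * (Y * (1 - W * Y))" by (simp add: ac_simps)
    also have "\<dots> = fps_X * (fps_const c * W * (W * Y) + fps_const b * W)"
      unfolding eq by (simp add: algebra_simps)
    finally have "(W * Y) * (1 - W * Y) = fps_X * (fps_const c * W * (W * Y) + fps_const b * W)" .
    then show ?thesis by (simp add: is_quad_root_def Y_def W_def)
  qed
  ultimately show ?thesis
    unfolding Z_def Y_def L_def by (metis is_quad_root_unique)
qed

lemma is_quad_root_inverse_identity:
  fixes y :: "'a::field fps"
  assumes "is_quad_root c b w y"
  shows "(fps_const w - 1) * (inverse (1 - y) - 1) + fps_X * fps_const (b + c * w) * inverse (1 - y)
       = fps_X * fps_const ((b + c) * w) * inverse (1 - fps_const w * y)"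
proof -
  define W B C where "W = fps_const w" and "B = fps_const b" and "C = fps_const c"
  define F where "F = inverse (1 - y)"
  define G where "G = inverse (1 - W * y)"
  define R where "R = (W - 1) * y + fps_X * (B + C * W)"
  have y0: "y $ 0 = 0" and eq: "y * (1 - W * y) = fps_X * (C * W * y + B)"
    using assms by (simp_all add: is_quad_root_def W_def B_def C_def)
  have F: "F * (1 - y) = 1" unfolding F_def by (rule inverse_mult_eq_1) (simp add: y0)
  have G: "G * (1 - W * y) = 1" unfolding G_def by (rule inverse_mult_eq_1) (simp add: y0 W_def)
  have "(1 - W * y) * R = (W - 1) * (y * (1 - W * y)) + fps_X * (B + C * W) * (1 - W * y)"
    by (simp add: R_def algebra_simps)
  also have "\<dots> = fps_X * (B + C) * W * (1 - y)"
    unfolding eq by (simp add: algebra_simps)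
  finally have R: "(1 - W * y) * R = fps_X * (B + C) * W * (1 - y)" .
  have "(W - 1) * (F - 1) + fps_X * (B + C * W) * F = F * R"
  proof -
    have "F - 1 = F * y" using F by (simp add: algebra_simps)
    then show ?thesis unfolding R_def by (simp only:) (simp add: algebra_simps)
  qed
  also have "\<dots> = F * (G * (1 - W * y)) * R" using G by simp
  also have "\<dots> = G * (F * (1 - y)) * (fps_X * (B + C) * W)"
    by (simp only: mult.assoc R) (simp add: ac_simps)
  also have "\<dots> = fps_X * (B + C) * W * G" using F by (simp add: ac_simps)
  finally show ?thesis by (simp add: F_def G_def W_def B_def C_def mult.assoc)
qed

lemma quad_root_inverse_recurrence:
  fixes c b w :: "'a::field"
  shows "(w - 1) * inverse (1 - quad_root c b w) $ Suc n
       + (b + c * w) * inverse (1 - quad_root c b w) $ n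
       = (b + c) * w ^ Suc n * inverse (1 - quad_root c b 1) $ n"
proof -
  define L where "L = fps_const w * fps_X"
  have "inverse (1 - quad_root c b 1) oo L = inverse ((1 - quad_root c b 1) oo L)"
    by (rule fps_inverse_compose) (simp_all add: L_def)
  also have "\<dots> = inverse (1 - fps_const w * quad_root c b w)"
    by (simp add: L_def fps_compose_sub_distrib quad_root_compose_linear)
  finally have "inverse (1 - fps_const w * quad_root c b w) = inverse (1 - quad_root c b 1) oo L" ..
  then have "inverse (1 - fps_const w * quad_root c b w) $ n = w ^ n * inverse (1 - quad_root c b 1) $ n"
    by (simp add: L_def)
  moreover have "fps_const w - 1 = fps_const (w - 1)" by (metis fps_const_1_eq_1 fps_const_sub)
  ultimately show ?thesis
    using arg_cong [OF is_quad_root_inverse_identity [OF is_quad_root_quad_root [of c b w]],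
      of "\<lambda>f. f $ Suc n"]
    by (simp add: algebra_simps)
qed

lemma polyfun_quad_coeff:
  fixes w :: "'a::comm_ring_1 \<Rightarrow> 'a"
  assumes "polyfun w"
  shows "polyfun (\<lambda>x. quad_coeff c b (w x) n)"
proof (induction n rule: less_induct)
  case (less n)
  show ?case
    by (subst quad_coeff.simps, cases "n = 0")
      (use less in \<open>auto intro!: polyfun_add polyfun_mult polyfun_sum polyfun_const assms\<close>)
qed

definition gen_series :: "'a::field \<Rightarrow> 'a \<Rightarrow> 'a \<Rightarrow> 'a fps" where
  "gen_series a b x = inverse (1 - quad_root (a - b) b ((b - x) / (b - a)))"

lemma gen_series_recurrence:
  fixes a b x :: "'a::field"
  assumes "a \<noteq> b"
  shows "(x - a) * (a - b) ^ n * gen_series a b x $ Suc n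
       = a * (x - b) ^ Suc n * gen_series a b a $ n - x * (a - b) ^ Suc n * gen_series a b x $ n"
proof -
  define c w where "c = a - b" and "w = (b - x) / (b - a)"
  have c: "c \<noteq> 0" using assms by (simp add: c_def)
  have "(w - 1) * c = x - a" and "b + c * w = x" and "w * c = x - b" and "b + c = a"
    using c by (simp_all add: c_def w_def field_simps)
  note coeffs = this
  have "(w - 1) * gen_series a b x $ Suc n + (b + c * w) * gen_series a b x $ n
      = (b + c) * w ^ Suc n * gen_series a b a $ n"
    using quad_root_inverse_recurrence [of w c b n] assms
    by (simp add: gen_series_def c_def w_def)
  then have "c ^ Suc n * ((w - 1) * gen_series a b x $ Suc n + (b + c * w) * gen_series a b x $ n)
      = c ^ Suc n * ((b + c) * w ^ Suc n * gen_series a b a $ n)"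
    by simp
  then have "((w - 1) * c) * c ^ n * gen_series a b x $ Suc n + (b + c * w) * c ^ Suc n * gen_series a b x $ n
      = (b + c) * (w * c) ^ Suc n * gen_series a b a $ n"
    by (simp add: algebra_simps power_mult_distrib)
  then have "(x - a) * c ^ n * gen_series a b x $ Suc n + x * c ^ Suc n * gen_series a b x $ n
      = a * (x - b) ^ Suc n * gen_series a b a $ n"
    by (simp only: coeffs)
  then show ?thesis by (simp add: c_def algebra_simps)
qed

lemma polyfun_gen_series_nth: "polyfun (\<lambda>x. gen_series a b x $ n)"
proof -
  have "polyfun (\<lambda>x. (b - x) / (b - a))"
    unfolding polyfun_def
    by (rule exI [of _ "[:b / (b - a), -1 / (b - a):]"]) (auto simp: diff_divide_distrib)
  then have "polyfun (\<lambda>x. quad_root (a - b) b ((b - x) / (b - a)) $ i)" for i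
    unfolding quad_root_def by (simp add: polyfun_quad_coeff)
  then show ?thesis
    unfolding gen_series_def by (intro polyfun_inverse_one_minus_nth) simp_all
qed

(* The recurrence determines the coefficient only for x \<noteq> a; polynomiality in x covers x = a. *)
lemma poly_gpoly:
  assumes "a \<noteq> b"
  shows "poly (gpoly a b n) x = gen_series a b x $ n"
proof (induction n arbitrary: x)
  case 0
  then show ?case by (simp add: gen_series_def)
next
  case (Suc n)
  obtain p where p: "poly p = (\<lambda>x. gen_series a b x $ Suc n)"
    using polyfun_gen_series_nth unfolding polyfun_def by blast
  define d where "d = smult ((a - b) ^ n) [:-a, 1:]"
  have numerator: "smult (a * poly (gpoly a b n) a) ([:-b, 1:] ^ Suc n)
      - smult ((a - b) ^ Suc n) (pCons 0 (gpoly a b n)) = d * p"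
  proof (rule poly_ext)
    fix x
    show "poly (smult (a * poly (gpoly a b n) a) ([:-b, 1:] ^ Suc n)
        - smult ((a - b) ^ Suc n) (pCons 0 (gpoly a b n))) x = poly (d * p) x"
      using gen_series_recurrence [OF assms, of x n] p
      by (simp add: Suc.IH d_def algebra_simps)
  qed
  have "gpoly a b (Suc n) = (d * p) div d"
    by (subst gpoly.simps) (simp only: numerator d_def)
  also have "\<dots> = p"
    using assms by (intro nonzero_mult_div_cancel_left) (simp add: d_def)
  finally show ?case using p by simp
qed

lemma eq_X_mult_Phi_iff:
  assumes "y $ 0 = 0"
  shows "y = fps_X * Phi a b x y \<longleftrightarrow> is_quad_root (a - b) b ((b - x) / (b - a)) y"
proof -
  define w where "w = (b - x) / (b - a)"
  define f where "f = fps_X * (fps_const ((a - b) * w) * y + fps_const b)"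
  define d where "d = 1 - fps_const w * y"
  have "y = fps_X * Phi a b x y \<longleftrightarrow> y = f * inverse d"
    by (simp add: Phi_def Let_def f_def d_def w_def mult.assoc)
  also have "\<dots> \<longleftrightarrow> y * d = f"
    using assms by (intro fps_eq_mult_inverse_iff) (simp add: d_def)
  finally show ?thesis using assms by (simp add: is_quad_root_def f_def d_def w_def)
qed

theorem mainTheorem6:
  fixes a b x :: complex
  assumes "a \<noteq> b"
  shows "(\<exists>!y :: complex fps. fps_nth y 0 = 0 \<and> y = fps_X * Phi a b x y)
    \<and> (\<forall>y :: complex fps. fps_nth y 0 = 0 \<and> y = fps_X * Phi a b x y \<longrightarrow>
         (\<forall>n. poly (gpoly a b n) x = fps_nth (inverse (1 - y)) n))"
proof -
  define w where "w = (b - x) / (b - a)"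
  have sol_iff: "y $ 0 = 0 \<and> y = fps_X * Phi a b x y \<longleftrightarrow> is_quad_root (a - b) b w y" for y
    using eq_X_mult_Phi_iff [of y] by (auto simp: w_def is_quad_root_def)
  have "\<exists>!y. is_quad_root (a - b) b w y"
    using is_quad_root_quad_root is_quad_root_unique by blast
  moreover have "poly (gpoly a b n) x = inverse (1 - y) $ n" if "is_quad_root (a - b) b w y" for y n
    using poly_gpoly [OF assms] is_quad_root_unique [OF that] by (simp add: gen_series_def w_def)
  ultimately show ?thesis unfolding sol_iff by blast
qed

end
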